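(* Let $E$ and $F$ be Banach spaces and let $T:E\to F$ be a coarse $(M,L)$-quasi isometry, with $\xi>0$ such that $T(E)$ is $\xi$-dense in $F$. Then there exists a bijective coarse $\big(M,(4M^2+3)L+4\xi\big)$-quasi isometry $\widetilde{T}:E\to F$ such that $\|\widetilde{T}x-Tx\|\le(2M^2+2)L+2\xi$ for all $x\in E$.
   Context: A set $S$ is $\xi$-dense in $F$ if every point of $F$ is at distance at most $\xi$ from some point of $S$. A map $T:E\to F$ between metric spaces is a coarse $(M,L)$-quasi isometry (with $M>0$, $L\ge0$) if $\frac{1}{M}d_E(x,y)-L\le d_F(Tx,Ty)\le M d_E(x,y)+L$ for all $x,y\in E$ and $T(E)$ is $\xi'$-dense in $F$ for some $\xi'>0$. *)

theory Defs
  imports "HOL-Analysis.Analysis"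
begin

definition xi_dense :: "real \<Rightarrow> 'a::metric_space set \<Rightarrow> 'a set \<Rightarrow> bool" where
  "xi_dense \<xi> S F \<longleftrightarrow> (\<forall>y\<in>F. \<exists>x\<in>S. dist y x \<le> \<xi>)"

definition coarse_qi :: "real \<Rightarrow> real \<Rightarrow> ('a::metric_space \<Rightarrow> 'b::metric_space) \<Rightarrow> bool" where
  "coarse_qi M L T \<longleftrightarrow> M > 0 \<and> L \<ge> 0 \<and>
     (\<forall>x y. (1 / M) * dist x y - L \<le> dist (T x) (T y) \<and> dist (T x) (T y) \<le> M * dist x y + L) \<and>
     (\<exists>\<xi>'>0. xi_dense \<xi>' (range T) UNIV)"

end

theory Submission
  imports Defs
begin

text \<open>
  A bijection whose graph lies in the relation "h x is close to T x" is produced by the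
  Schroeder--Bernstein construction from an injection \<open>f : E \<rightarrow> F\<close> close to \<open>T\<close> and an
  injection \<open>g : F \<rightarrow> E\<close> with \<open>T \<circ> g\<close> close to the identity. Such \<open>f\<close> (resp. \<open>g\<close>) is obtained
  by moving each \<open>T x\<close> (resp. each point of a quasi-inverse of \<open>T\<close>) to a nearby point of a
  separated net and then displacing it inside a small ball by an injective function of \<open>x\<close>.
  Injections \<open>E \<rightarrow> F\<close> and \<open>F \<rightarrow> E\<close> exist because a coarse embedding \<open>\<phi>\<close> recovers \<open>x\<close> from the
  net points nearest to \<open>\<phi> (2^k x)\<close>, \<open>k \<in> \<nat>\<close>, and sequences of net points embed into a
  Banach space as sums of rapidly decreasing series.
\<close>

lemma Schroeder_Bernstein_piecewise:
  fixes f :: "'a \<Rightarrow> 'b" and g :: "'b \<Rightarrow> 'a"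
  assumes "inj f" and "inj g"
  shows "\<exists>h. bij h \<and> (\<forall>x. h x = f x \<or> g (h x) = x)"
proof -
  define X where "X = lfp (\<lambda>X. - g ` (- f ` X))"
  have "X = - g ` (- f ` X)"
    unfolding X_def by (rule lfp_unfold) (blast intro: monoI)
  then have X: "- X = g ` (- f ` X)"
    by (metis double_complement)
  define h where "h z = (if z \<in> X then f z else inv g z)" for z
  have g_h: "g (h z) = z" and h_notin: "h z \<notin> f ` X" if "z \<notin> X" for z
  proof -
    from that X obtain w where w: "w \<notin> f ` X" "z = g w" by blast
    then have "h z = w" using \<open>z \<notin> X\<close> \<open>inj g\<close> by (simp add: h_def)
    with w show "g (h z) = z" "h z \<notin> f ` X" by auto
  qed
  have "inj h"
  proof (rule injI)
    fix a b assume hab: "h a = h b"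
    show "a = b"
    proof (cases "a \<in> X"; cases "b \<in> X")
      assume "a \<in> X" "b \<in> X"
      then show ?thesis using hab \<open>inj f\<close> by (simp add: h_def inj_eq)
    next
      assume "a \<notin> X" "b \<notin> X"
      then show ?thesis using hab g_h by metis
    next
      assume "a \<in> X" "b \<notin> X"
      then show ?thesis using hab h_notin[of b] unfolding h_def by (metis imageI)
    next
      assume "a \<notin> X" "b \<in> X"
      then show ?thesis using hab h_notin[of a] unfolding h_def by (metis imageI)
    qed
  qed
  moreover have "surj h"
  proof (rule surjI)
    fix y
    show "h (if y \<in> f ` X then inv f y else g y) = y"
    proof (cases "y \<in> f ` X")
      case True
      then show ?thesis using \<open>inj f\<close> by (auto simp: h_def)
    next
      case False
      then have "g y \<notin> X" using X by blast
      then show ?thesis using False \<open>inj g\<close> by (simp add: h_def)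
    qed
  qed
  moreover have "h x = f x \<or> g (h x) = x" for x
    using g_h by (cases "x \<in> X") (simp_all add: h_def)
  ultimately show ?thesis
    by (auto simp: bij_def)
qed

definition separated_set :: "real \<Rightarrow> 'a::metric_space set \<Rightarrow> bool" where
  "separated_set \<delta> D \<longleftrightarrow> (\<forall>a\<in>D. \<forall>b\<in>D. a \<noteq> b \<longrightarrow> \<delta> \<le> dist a b)"

lemma separated_net_exists:
  fixes \<delta> :: real
  assumes "\<delta> > 0"
  obtains D :: "'a::metric_space set" and p :: "'a \<Rightarrow> 'a"
  where "separated_set \<delta> D" and "\<And>x. p x \<in> D" and "\<And>x. dist x (p x) < \<delta>"
proof -
  define A where "A = {S::'a set. separated_set \<delta> S}"
  have "\<Union>C \<in> A" if C: "C \<in> chains A" for C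
    unfolding A_def separated_set_def
  proof (intro CollectI ballI impI)
    fix a b assume "a \<in> \<Union>C" "b \<in> \<Union>C" "a \<noteq> b"
    then obtain S1 S2 where S: "S1 \<in> C" "S2 \<in> C" "a \<in> S1" "b \<in> S2" by blast
    with C have "S1 \<subseteq> S2 \<or> S2 \<subseteq> S1" and "S1 \<in> A" "S2 \<in> A"
      unfolding chains_def chain_subset_def by auto
    with S \<open>a \<noteq> b\<close> show "\<delta> \<le> dist a b" unfolding A_def separated_set_def by blast
  qed
  then obtain D where D: "D \<in> A" and maximal: "\<And>S. S \<in> A \<Longrightarrow> D \<subseteq> S \<Longrightarrow> S = D"
    using Zorn_Lemma[of A] by blast
  have "\<exists>d\<in>D. dist x d < \<delta>" for x
  proof (rule ccontr)
    assume far: "\<not> (\<exists>d\<in>D. dist x d < \<delta>)"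
    then have "insert x D \<in> A"
      using D unfolding A_def separated_set_def by (auto simp: dist_commute not_less)
    then have "x \<in> D" using maximal by blast
    with far assms show False by force
  qed
  then obtain p where p: "\<And>x. p x \<in> D" "\<And>x. dist x (p x) < \<delta>"
    by metis
  from D have sep: "separated_set \<delta> D"
    unfolding A_def by blast
  show ?thesis by (rule that[OF sep p])
qed

definition squash :: "'a::real_normed_vector \<Rightarrow> 'a" where
  "squash y = (1 / (1 + norm y)) *\<^sub>R y"

lemma norm_squash: "norm (squash y) = norm y / (1 + norm y)"
  by (simp add: squash_def add_pos_nonneg)

lemma norm_squash_less_1: "norm (squash y) < 1"
  by (simp add: norm_squash add_pos_nonneg)

lemma norm_diff_le_norm_squash_diff:
  fixes d d' :: "'a::real_normed_vector"
  shows "norm (d - d') / ((1 + norm d) * (1 + norm d')) \<le> norm (squash d - squash d')"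
proof -
  have wlog: "norm (d - d') / ((1 + norm d) * (1 + norm d')) \<le> norm (squash d - squash d')"
    if "norm d \<le> norm d'" for d d' :: 'a
  proof -
    define a b s where "a = norm d" and "b = norm d'" and "s = norm (d - d')"
    have "0 \<le> a" "a \<le> b" "b - a \<le> s"
      using that norm_triangle_ineq2[of d' d] by (auto simp: a_def b_def s_def norm_minus_commute)
    have "s = (1 + a) * s - s * a" by (simp add: algebra_simps)
    also have "\<dots> \<le> (1 + a) * s - (b - a) * a"
      using \<open>b - a \<le> s\<close> \<open>0 \<le> a\<close> by (simp add: mult_right_mono)
    also have "\<dots> = norm ((1 + a) *\<^sub>R (d - d')) - norm ((b - a) *\<^sub>R d)"
      using \<open>0 \<le> a\<close> \<open>a \<le> b\<close> by (simp add: s_def a_def)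
    also have "\<dots> \<le> norm ((1 + a) *\<^sub>R (d - d') + (b - a) *\<^sub>R d)"
      by (metis norm_diff_ineq norm_minus_cancel diff_minus_eq_add)
    also have "(1 + a) *\<^sub>R (d - d') + (b - a) *\<^sub>R d = (1 + b) *\<^sub>R d - (1 + a) *\<^sub>R d'"
      by (simp add: algebra_simps)
    also have "\<dots> = ((1 + a) * (1 + b)) *\<^sub>R (squash d - squash d')"
      using \<open>0 \<le> a\<close> \<open>a \<le> b\<close> unfolding a_def b_def
      by (simp add: squash_def scaleR_diff_right add_nonneg_eq_0_iff)
    finally have "s \<le> norm (squash d - squash d') * ((1 + a) * (1 + b))"
      using \<open>0 \<le> a\<close> \<open>a \<le> b\<close> by (simp add: mult.commute)
    moreover have "0 < (1 + a) * (1 + b)"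
      using \<open>0 \<le> a\<close> \<open>a \<le> b\<close> by simp
    ultimately have "s / ((1 + a) * (1 + b)) \<le> norm (squash d - squash d')"
      by (simp only: pos_divide_le_eq)
    then show ?thesis
      by (simp add: a_def b_def s_def)
  qed
  show ?thesis
    using wlog[of d d'] wlog[of d' d]
    by (cases "norm d \<le> norm d'") (simp_all add: norm_minus_commute mult.commute)
qed

lemma inj_squash: "inj squash"
proof (rule injI)
  fix d d' :: 'a assume "squash d = squash d'"
  then have "norm (d - d') / ((1 + norm d) * (1 + norm d')) \<le> 0"
    using norm_diff_le_norm_squash_diff[of d d'] by simp
  moreover have "0 < (1 + norm d) * (1 + norm d')"
    by (simp add: add_pos_nonneg)
  ultimately show "d = d'"
    by (simp add: divide_le_0_iff)
qed

lemma inverse_square_sum_less: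
  fixes p q s :: real
  assumes "1 \<le> p" "1 \<le> q" "1 \<le> s" "\<bar>q - p\<bar> \<le> s"
  shows "1 / (8 * p\<^sup>2) + 1 / (8 * q\<^sup>2) < s / (p * q)"
proof -
  have "p \<le> p * q" "q \<le> p * q"
    using mult_left_mono[of 1 q p] mult_right_mono[of 1 p q] assms(1,2) by simp_all
  then have "\<bar>q - p\<bar> \<le> p * q"
    unfolding abs_le_iff using assms(1,2) by linarith
  with assms(4) have "\<bar>q - p\<bar> * \<bar>q - p\<bar> \<le> s * (p * q)"
    by (rule mult_mono) (use assms(3) in simp_all)
  moreover have "2 * (p * q) \<le> 2 * s * (p * q)" "0 < p * q"
    using assms mult_right_mono[of 1 s "p * q"] by simp_all
  ultimately have "p\<^sup>2 + q\<^sup>2 < 8 * s * (p * q)"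
    by (simp add: power2_eq_square algebra_simps)
  then have "(p\<^sup>2 + q\<^sup>2) / (8 * (p * q)\<^sup>2) < 8 * s * (p * q) / (8 * (p * q)\<^sup>2)"
    using assms(1,2) by (intro divide_strict_right_mono) simp_all
  moreover have "1 / (8 * p\<^sup>2) + 1 / (8 * q\<^sup>2) = (p\<^sup>2 + q\<^sup>2) / (8 * (p * q)\<^sup>2)"
    and "8 * s * (p * q) / (8 * (p * q)\<^sup>2) = s / (p * q)"
    using assms(1,2) by (simp_all add: field_simps power2_eq_square)
  ultimately show ?thesis
    by simp
qed

text \<open>
  \<open>encode_seq \<sigma> = squash (\<sigma> 0) + encode_weight (\<sigma> 0) *\<^sub>R encode_seq (\<sigma> \<circ> Suc)\<close> lies within
  \<open>2 * encode_weight (\<sigma> 0)\<close> of \<open>squash (\<sigma> 0)\<close>; for 1-separated points this is too little to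
  bridge the gap between \<open>squash d\<close> and \<open>squash d'\<close>, so every \<open>\<sigma> k\<close> can be read off.
\<close>

definition encode_weight :: "'a::real_normed_vector \<Rightarrow> real" where
  "encode_weight y = 1 / (16 * (1 + norm y)\<^sup>2)"

definition encode_term :: "(nat \<Rightarrow> 'a::real_normed_vector) \<Rightarrow> nat \<Rightarrow> 'a" where
  "encode_term \<sigma> k = (\<Prod>j<k. encode_weight (\<sigma> j)) *\<^sub>R squash (\<sigma> k)"

definition encode_seq :: "(nat \<Rightarrow> 'a::banach) \<Rightarrow> 'a" where
  "encode_seq \<sigma> = (\<Sum>k. encode_term \<sigma> k)"

lemma encode_weight_pos: "0 < encode_weight y"
  unfolding encode_weight_def
  by (intro divide_pos_pos mult_pos_pos zero_less_power) (simp_all add: add_pos_nonneg)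

lemma encode_weight_le: "encode_weight y \<le> 1 / 16"
proof -
  have "1 \<le> (1 + norm y)\<^sup>2"
    by (simp add: one_le_power)
  then show ?thesis
    by (simp add: encode_weight_def divide_le_eq_1)
qed

lemma norm_encode_term_le: "norm (encode_term \<sigma> k) \<le> (1 / 2) ^ k"
proof -
  have "(\<Prod>j<k. encode_weight (\<sigma> j)) \<le> (\<Prod>j<k. 1 / 2)"
  proof (rule prod_mono)
    fix j
    show "0 \<le> encode_weight (\<sigma> j) \<and> encode_weight (\<sigma> j) \<le> 1 / 2"
      using encode_weight_pos[of "\<sigma> j"] encode_weight_le[of "\<sigma> j"] by linarith
  qed
  moreover have "0 \<le> (\<Prod>j<k. encode_weight (\<sigma> j))"
    by (intro prod_nonneg) (simp add: encode_weight_pos less_imp_le)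
  moreover have "(\<Prod>j<k. encode_weight (\<sigma> j)) * norm (squash (\<sigma> k)) \<le> (\<Prod>j<k. encode_weight (\<sigma> j))"
    using calculation(2) norm_squash_less_1[of "\<sigma> k"] by (simp add: mult_left_le)
  ultimately show ?thesis
    by (simp add: encode_term_def)
qed

lemma summable_norm_encode_term: "summable (\<lambda>k. norm (encode_term \<sigma> k))"
  by (rule summable_comparison_test[where g="\<lambda>k. (1 / 2 :: real) ^ k"])
     (use norm_encode_term_le in auto)

lemma norm_encode_seq_le: "norm (encode_seq \<sigma>) \<le> 2"
proof -
  have "norm (encode_seq \<sigma>) \<le> (\<Sum>k. norm (encode_term \<sigma> k))"
    unfolding encode_seq_def by (rule summable_norm[OF summable_norm_encode_term])
  also have "\<dots> \<le> (\<Sum>k. (1 / 2 :: real) ^ k)"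
    by (rule suminf_le) (use norm_encode_term_le summable_norm_encode_term in auto)
  also have "\<dots> = 2"
    by (simp add: suminf_geometric)
  finally show ?thesis .
qed

lemma encode_seq_Suc:
  "encode_seq \<sigma> = squash (\<sigma> 0) + encode_weight (\<sigma> 0) *\<^sub>R encode_seq (\<lambda>k. \<sigma> (Suc k))"
proof -
  have shift: "encode_term \<sigma> (Suc k) = encode_weight (\<sigma> 0) *\<^sub>R encode_term (\<lambda>k. \<sigma> (Suc k)) k" for k
    unfolding encode_term_def prod.lessThan_Suc_shift by (simp del: prod.lessThan_Suc)
  have "(\<Sum>k. encode_term \<sigma> (Suc k)) = encode_seq \<sigma> - encode_term \<sigma> 0"
    unfolding encode_seq_def
    by (rule suminf_split_head) (rule summable_norm_cancel[OF summable_norm_encode_term])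
  moreover have "(\<Sum>k. encode_term \<sigma> (Suc k)) = encode_weight (\<sigma> 0) *\<^sub>R encode_seq (\<lambda>k. \<sigma> (Suc k))"
    unfolding shift encode_seq_def
    by (rule suminf_scaleR_right[symmetric]) (rule summable_norm_cancel[OF summable_norm_encode_term])
  ultimately show ?thesis
    by (simp add: encode_term_def algebra_simps)
qed

lemma norm_encode_seq_minus_squash: "norm (encode_seq \<sigma> - squash (\<sigma> 0)) \<le> 2 * encode_weight (\<sigma> 0)"
proof -
  have "norm (encode_seq \<sigma> - squash (\<sigma> 0)) = encode_weight (\<sigma> 0) * norm (encode_seq (\<lambda>k. \<sigma> (Suc k)))"
    using encode_seq_Suc[of \<sigma>] encode_weight_pos[of "\<sigma> 0"] by simp
  also have "\<dots> \<le> encode_weight (\<sigma> 0) * 2"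
    using encode_weight_pos[of "\<sigma> 0"] norm_encode_seq_le by (simp add: mult_left_mono)
  finally show ?thesis
    by simp
qed

lemma squash_diff_gt_encode_weights:
  fixes d d' :: "'a::real_normed_vector"
  assumes "1 \<le> norm (d - d')"
  shows "2 * encode_weight d + 2 * encode_weight d' < norm (squash d - squash d')"
proof -
  have "\<bar>(1 + norm d') - (1 + norm d)\<bar> \<le> norm (d - d')"
    using norm_triangle_ineq3[of d' d] by (simp add: norm_minus_commute)
  then have "1 / (8 * (1 + norm d)\<^sup>2) + 1 / (8 * (1 + norm d')\<^sup>2)
      < norm (d - d') / ((1 + norm d) * (1 + norm d'))"
    using assms by (intro inverse_square_sum_less) simp_all
  also have "\<dots> \<le> norm (squash d - squash d')"
    by (rule norm_diff_le_norm_squash_diff)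
  finally show ?thesis
    by (simp add: encode_weight_def)
qed

lemma encode_seq_eq_imp_hd_eq:
  assumes "separated_set 1 D" and "\<And>k. \<sigma> k \<in> D" and "\<And>k. \<tau> k \<in> D"
    and "encode_seq \<sigma> = encode_seq \<tau>"
  shows "\<sigma> 0 = \<tau> 0"
proof (rule ccontr)
  assume "\<sigma> 0 \<noteq> \<tau> 0"
  with assms(1-3) have "1 \<le> norm (\<sigma> 0 - \<tau> 0)"
    by (simp add: separated_set_def dist_norm)
  then have "2 * encode_weight (\<sigma> 0) + 2 * encode_weight (\<tau> 0) < norm (squash (\<sigma> 0) - squash (\<tau> 0))"
    by (rule squash_diff_gt_encode_weights)
  also have "squash (\<sigma> 0) - squash (\<tau> 0)
      = (encode_seq \<tau> - squash (\<tau> 0)) - (encode_seq \<sigma> - squash (\<sigma> 0))"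
    using assms(4) by simp
  finally show False
    using norm_triangle_ineq4[of "encode_seq \<tau> - squash (\<tau> 0)" "encode_seq \<sigma> - squash (\<sigma> 0)"]
      norm_encode_seq_minus_squash[of \<sigma>] norm_encode_seq_minus_squash[of \<tau>]
    by linarith
qed

lemma inj_on_encode_seq:
  assumes "separated_set 1 D"
  shows "inj_on encode_seq {\<sigma>. \<forall>k. \<sigma> k \<in> D}"
proof (rule inj_onI)
  fix \<sigma> \<tau> assume "\<sigma> \<in> {\<sigma>. \<forall>k. \<sigma> k \<in> D}" "\<tau> \<in> {\<sigma>. \<forall>k. \<sigma> k \<in> D}"
    and "encode_seq \<sigma> = encode_seq \<tau>"
  then have "\<sigma> n = \<tau> n" for n
  proof (induction n arbitrary: \<sigma> \<tau>)
    case 0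
    then show ?case
      using encode_seq_eq_imp_hd_eq[OF assms] by blast
  next
    case (Suc n)
    then have "\<sigma> 0 = \<tau> 0"
      using encode_seq_eq_imp_hd_eq[OF assms] by blast
    with Suc.prems(3) have "encode_seq (\<lambda>k. \<sigma> (Suc k)) = encode_seq (\<lambda>k. \<tau> (Suc k))"
      using encode_seq_Suc[of \<sigma>] encode_seq_Suc[of \<tau>] encode_weight_pos[of "\<sigma> 0"] by simp
    with Suc.prems(1,2) show ?case
      using Suc.IH[of "\<lambda>k. \<sigma> (Suc k)" "\<lambda>k. \<tau> (Suc k)"] by simp
  qed
  then show "\<sigma> = \<tau>" by blast
qed

lemma ex_inj_if_coarse_lower_bound:
  fixes \<phi> :: "'a::real_normed_vector \<Rightarrow> 'b::banach"
  assumes "K \<ge> 0" and lower: "\<And>x y. dist x y \<le> K * dist (\<phi> x) (\<phi> y) + C"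
  shows "\<exists>\<iota>::'a \<Rightarrow> 'b. inj \<iota>"
proof -
  obtain D :: "'b set" and p where D: "separated_set 1 D" and p: "\<And>y. p y \<in> D" "\<And>y. dist y (p y) < 1"
    using separated_net_exists[of 1] by auto
  define \<sigma> where "\<sigma> x = (\<lambda>k. p (\<phi> ((2 ^ k) *\<^sub>R x)))" for x
  have "inj (\<lambda>x. encode_seq (\<sigma> x))"
  proof (rule injI)
    fix x x' assume "encode_seq (\<sigma> x) = encode_seq (\<sigma> x')"
    then have "\<sigma> x = \<sigma> x'"
      using inj_on_encode_seq[OF D] p(1) by (auto simp: \<sigma>_def dest: inj_onD)
    have scaled_bound: "2 ^ k * norm (x - x') \<le> 2 * K + C" for k :: nat
    proof -
      let ?u = "(2 ^ k) *\<^sub>R x" and ?u' = "(2 ^ k) *\<^sub>R x'"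
      have "p (\<phi> ?u) = p (\<phi> ?u')"
        using \<open>\<sigma> x = \<sigma> x'\<close> unfolding \<sigma>_def by meson
      then have "dist (\<phi> ?u) (\<phi> ?u') < 2"
        using dist_triangle[of "\<phi> ?u" "\<phi> ?u'" "p (\<phi> ?u)"] p(2)[of "\<phi> ?u"] p(2)[of "\<phi> ?u'"]
        by (simp add: dist_commute)
      then have "K * dist (\<phi> ?u) (\<phi> ?u') \<le> 2 * K"
        using \<open>K \<ge> 0\<close> by (simp add: mult_left_mono mult.commute)
      moreover have "dist ?u ?u' = 2 ^ k * norm (x - x')"
        by (simp add: dist_norm scaleR_diff_right[symmetric])
      ultimately show ?thesis
        using lower[of ?u ?u'] by linarith
    qed
    show "x = x'"
    proof (rule ccontr)
      assume "x \<noteq> x'"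
      then obtain k :: nat where "(2 * K + C) / norm (x - x') < 2 ^ k"
        using real_arch_pow[of 2] by fastforce
      with \<open>x \<noteq> x'\<close> have "2 * K + C < 2 ^ k * norm (x - x')"
        by (simp add: divide_less_eq)
      with scaled_bound[of k] show False
        by linarith
    qed
  qed
  then show ?thesis
    by blast
qed

lemma ex_inj_near:
  fixes \<psi> :: "'a \<Rightarrow> 'b::real_normed_vector"
  assumes "\<epsilon> > 0" and "inj (\<iota> :: 'a \<Rightarrow> 'b)"
  shows "\<exists>f. inj f \<and> (\<forall>x. dist (f x) (\<psi> x) < \<epsilon>)"
proof -
  obtain D :: "'b set" and p where D: "separated_set (\<epsilon> / 2) D"
    and p: "\<And>y. p y \<in> D" "\<And>y. dist y (p y) < \<epsilon> / 2"
    using separated_net_exists[of "\<epsilon> / 2"] \<open>\<epsilon> > 0\<close> by auto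
  define f where "f x = p (\<psi> x) + (\<epsilon> / 4) *\<^sub>R squash (\<iota> x)" for x
  have near_net: "dist (f x) (p (\<psi> x)) < \<epsilon> / 4" for x
    using norm_squash_less_1[of "\<iota> x"] \<open>\<epsilon> > 0\<close> by (simp add: f_def dist_norm)
  have "inj f"
  proof (rule injI)
    fix x x' assume "f x = f x'"
    then have "dist (p (\<psi> x)) (p (\<psi> x')) < \<epsilon> / 2"
      using dist_triangle3[of "p (\<psi> x)" "p (\<psi> x')" "f x"] near_net[of x] near_net[of x'] by simp
    then have "p (\<psi> x) = p (\<psi> x')"
      using D p(1) unfolding separated_set_def by force
    with \<open>f x = f x'\<close> \<open>\<epsilon> > 0\<close> have "squash (\<iota> x) = squash (\<iota> x')"
      by (simp add: f_def)
    then show "x = x'"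
      using inj_squash \<open>inj \<iota>\<close> by (metis injD)
  qed
  moreover have "dist (f x) (\<psi> x) < \<epsilon>" for x
    using dist_triangle2[of "f x" "\<psi> x" "p (\<psi> x)"] near_net[of x] p(2)[of "\<psi> x"] \<open>\<epsilon> > 0\<close>
    by linarith
  ultimately show ?thesis
    by blast
qed

lemma coarse_qi_lower_bound:
  assumes "coarse_qi M L T"
  shows "dist x y \<le> M * dist (T x) (T y) + M * L"
proof -
  from assms have "M > 0" and "(1 / M) * dist x y - L \<le> dist (T x) (T y)"
    unfolding coarse_qi_def by auto
  then show ?thesis
    by (simp add: field_simps)
qed

lemma coarse_qi_quasi_inverse:
  assumes "coarse_qi M L T" and "xi_dense \<xi> (range T) UNIV"
  obtains G where "\<And>y. dist y (T (G y)) \<le> \<xi>"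
    and "\<And>y y'. dist y y' \<le> M * dist (G y) (G y') + (L + 2 * \<xi>)"
proof -
  from assms(2) have "\<forall>y. \<exists>x. dist y (T x) \<le> \<xi>"
    unfolding xi_dense_def by blast
  then obtain G where G: "\<And>y. dist y (T (G y)) \<le> \<xi>"
    by metis
  have "dist y y' \<le> M * dist (G y) (G y') + (L + 2 * \<xi>)" for y y'
  proof -
    have "dist y y' \<le> dist y (T (G y)) + dist (T (G y)) (T (G y')) + dist y' (T (G y'))"
      using dist_triangle[of y y' "T (G y)"] dist_triangle[of "T (G y)" y' "T (G y')"]
      by (simp add: dist_commute)
    also have "dist (T (G y)) (T (G y')) \<le> M * dist (G y) (G y') + L"
      using assms(1) unfolding coarse_qi_def by blast
    finally show ?thesis
      using G[of y] G[of y'] by linarith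
  qed
  with G show ?thesis
    by (rule that)
qed

lemma coarse_qi_mono:
  assumes "coarse_qi M L T" and "L \<le> L'"
  shows "coarse_qi M L' T"
proof -
  have "(1 / M) * dist x y - L' \<le> dist (T x) (T y)" and "dist (T x) (T y) \<le> M * dist x y + L'" for x y
    using assms unfolding coarse_qi_def by (meson add_left_mono diff_left_mono order_trans)+
  with assms show ?thesis
    unfolding coarse_qi_def by auto
qed

lemma coarse_qi_if_close:
  assumes T: "coarse_qi M L T" and close: "\<And>x. dist (h x) (T x) \<le> B"
  shows "coarse_qi M (L + 2 * B) h"
proof -
  obtain \<xi>' where "M > 0" "L \<ge> 0" "\<xi>' > 0" and dense: "xi_dense \<xi>' (range T) UNIV"
    and lower: "\<And>x y. (1 / M) * dist x y - L \<le> dist (T x) (T y)"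
    and upper: "\<And>x y. dist (T x) (T y) \<le> M * dist x y + L"
    using T unfolding coarse_qi_def by blast
  have "B \<ge> 0"
    using close[of undefined] zero_le_dist order_trans by blast
  have diff: "\<bar>dist (h x) (h y) - dist (T x) (T y)\<bar> \<le> 2 * B" for x y
    using dist_triangle[of "h x" "h y" "T x"] dist_triangle[of "T x" "h y" "T y"]
      dist_triangle[of "T x" "T y" "h x"] dist_triangle[of "h x" "T y" "h y"]
      close[of x] close[of y]
    by (simp add: dist_commute abs_le_iff)
  have "xi_dense (\<xi>' + B) (range h) UNIV"
    unfolding xi_dense_def
  proof
    fix y
    from dense obtain x where "dist y (T x) \<le> \<xi>'"
      unfolding xi_dense_def by blast
    then have "dist y (h x) \<le> \<xi>' + B"
      using dist_triangle[of y "h x" "T x"] close[of x] by (simp add: dist_commute)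
    then show "\<exists>z\<in>range h. dist y z \<le> \<xi>' + B"
      by blast
  qed
  moreover have "(1 / M) * dist x y - (L + 2 * B) \<le> dist (h x) (h y)"
    and "dist (h x) (h y) \<le> M * dist x y + (L + 2 * B)" for x y
    using diff[of x y] lower[of x y] upper[of x y] by (auto simp: abs_le_iff)
  ultimately show ?thesis
    unfolding coarse_qi_def using \<open>M > 0\<close> \<open>L \<ge> 0\<close> \<open>B \<ge> 0\<close> \<open>\<xi>' > 0\<close>
    by (auto intro: add_pos_nonneg)
qed

lemma bij_close_to_coarse_qi:
  fixes T :: "'a::banach \<Rightarrow> 'b::banach"
  assumes "coarse_qi M L T" and "\<xi> > 0" and "xi_dense \<xi> (range T) UNIV"
  obtains h where "bij h" and "\<And>x. dist (h x) (T x) \<le> L + 3 / 2 * \<xi>"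
proof -
  have "M > 0" "L \<ge> 0" and upper: "\<And>x y. dist (T x) (T y) \<le> M * dist x y + L"
    using assms(1) unfolding coarse_qi_def by auto
  obtain G where G: "\<And>y. dist y (T (G y)) \<le> \<xi>"
    and G_lower: "\<And>y y'. dist y y' \<le> M * dist (G y) (G y') + (L + 2 * \<xi>)"
    using coarse_qi_quasi_inverse[OF assms(1,3)] by blast
  obtain \<iota> :: "'a \<Rightarrow> 'b" where "inj \<iota>"
    using ex_inj_if_coarse_lower_bound[OF _ coarse_qi_lower_bound[OF assms(1)]] \<open>M > 0\<close> by auto
  then obtain f where "inj f" and f: "\<And>x. dist (f x) (T x) < \<xi> / 2"
    using ex_inj_near[of "\<xi> / 2" \<iota> T] \<open>\<xi> > 0\<close> by auto
  obtain \<kappa> :: "'b \<Rightarrow> 'a" where "inj \<kappa>"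
    using ex_inj_if_coarse_lower_bound[OF _ G_lower] \<open>M > 0\<close> by auto
  then obtain g where "inj g" and g: "\<And>y. dist (g y) (G y) < \<xi> / (2 * M)"
    using ex_inj_near[of "\<xi> / (2 * M)" \<kappa> G] \<open>\<xi> > 0\<close> \<open>M > 0\<close> by auto
  obtain h where "bij h" and h: "\<And>x. h x = f x \<or> g (h x) = x"
    using Schroeder_Bernstein_piecewise[OF \<open>inj f\<close> \<open>inj g\<close>] by blast
  have close: "dist (h x) (T x) \<le> L + 3 / 2 * \<xi>" for x
  proof (cases "h x = f x")
    case True
    then show ?thesis
      using f[of x] \<open>L \<ge> 0\<close> \<open>\<xi> > 0\<close> by simp
  next
    case False
    with h have "g (h x) = x" by blast
    have "M * dist (G (h x)) (g (h x)) \<le> \<xi> / 2"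
      using g[of "h x"] \<open>M > 0\<close> by (simp add: dist_commute field_simps)
    then have "dist (h x) (T (g (h x))) \<le> L + 3 / 2 * \<xi>"
      using dist_triangle[of "h x" "T (g (h x))" "T (G (h x))"] G[of "h x"]
        upper[of "G (h x)" "g (h x)"]
      by linarith
    with \<open>g (h x) = x\<close> show ?thesis
      by simp
  qed
  with \<open>bij h\<close> show ?thesis
    by (rule that)
qed

theorem fact3:
  fixes T :: "'a::banach \<Rightarrow> 'b::banach" and M L \<xi> :: real
  assumes "coarse_qi M L T"
    and "\<xi> > 0"
    and "xi_dense \<xi> (range T) UNIV"
  shows "\<exists>T' :: 'a \<Rightarrow> 'b. bij T' \<and> coarse_qi M ((4 * M^2 + 3) * L + 4 * \<xi>) T' \<and>
           (\<forall>x. norm (T' x - T x) \<le> (2 * M^2 + 2) * L + 2 * \<xi>)"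
proof -
  obtain h where "bij h" and close: "\<And>x. dist (h x) (T x) \<le> L + 3 / 2 * \<xi>"
    using bij_close_to_coarse_qi[OF assms] by blast
  have "L \<ge> 0"
    using assms(1) unfolding coarse_qi_def by blast
  have "coarse_qi M ((4 * M^2 + 3) * L + 4 * \<xi>) h"
  proof (rule coarse_qi_mono)
    show "coarse_qi M (L + 2 * (L + 3 / 2 * \<xi>)) h"
      using assms(1) close by (rule coarse_qi_if_close)
    show "L + 2 * (L + 3 / 2 * \<xi>) \<le> (4 * M^2 + 3) * L + 4 * \<xi>"
      using \<open>L \<ge> 0\<close> \<open>\<xi> > 0\<close> by (simp add: algebra_simps)
  qed
  moreover have "norm (h x - T x) \<le> (2 * M^2 + 2) * L + 2 * \<xi>" for x
  proof -
    have "0 \<le> 2 * M^2 * L" and "(2 * M^2 + 2) * L = 2 * M^2 * L + 2 * L"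
      using \<open>L \<ge> 0\<close> by (simp_all add: algebra_simps)
    then show ?thesis
      using close[of x] \<open>L \<ge> 0\<close> \<open>\<xi> > 0\<close> unfolding dist_norm by linarith
  qed
  ultimately show ?thesis
    using \<open>bij h\<close> by blast
qed

end
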